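(* Let $G$ be any graph on $n$ vertices. For each edge $e\in E(G)$ let $c(e)$ denote the largest $r$ such that $e$ is an edge of a subgraph of $G$ isomorphic to $K_r$ (so $c(e)\ge 2$). Then \[ \sum_{e\in E(G)} \frac{c(e)}{c(e)-1} \le \frac{n^2}{2}, \] and equality holds if and only if $G$ is a complete multipartite graph with at least two parts, all parts having the same size.
   Context: $K_r$ denotes the complete graph on $r$ vertices. Graphs are finite and simple. *)

theory Defs
  imports Complex_Main "HOL-Library.Disjoint_Sets"
begin

definition simple_graph :: "'a set \<Rightarrow> 'a set set \<Rightarrow> bool" where
  "simple_graph V E \<longleftrightarrow> finite V \<and> (\<forall>e\<in>E. e \<subseteq> V \<and> card e = 2)"

definition is_clique :: "'a set \<Rightarrow> 'a set set \<Rightarrow> 'a set \<Rightarrow> bool" where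
  "is_clique V E K \<longleftrightarrow> K \<subseteq> V \<and> (\<forall>u\<in>K. \<forall>v\<in>K. u \<noteq> v \<longrightarrow> {u, v} \<in> E)"

definition edge_clique_num :: "'a set \<Rightarrow> 'a set set \<Rightarrow> 'a set \<Rightarrow> nat" where
  "edge_clique_num V E e = Max {card K | K. is_clique V E K \<and> e \<subseteq> K}"

definition balanced_complete_multipartite :: "'a set \<Rightarrow> 'a set set \<Rightarrow> bool" where
  "balanced_complete_multipartite V E \<longleftrightarrow>
    (\<exists>P. partition_on V P \<and> card P \<ge> 2 \<and> (\<forall>A\<in>P. \<forall>B\<in>P. card A = card B) \<and>
         (\<forall>u\<in>V. \<forall>v\<in>V. {u, v} \<in> E \<longleftrightarrow> (u \<noteq> v \<and> \<not> (\<exists>A\<in>P. u \<in> A \<and> v \<in> A))))"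

end

theory Submission
  imports Defs
begin

text \<open>
  Induction on the number of vertices. Take a maximum clique \<open>K\<close> of size \<open>r\<close> and
  let \<open>W = V - K\<close>. Edges inside \<open>K\<close> have \<open>c = r\<close> and contribute \<open>r\<^sup>2/2\<close>. A vertex
  of \<open>W\<close> with \<open>d \<ge> 1\<close> neighbours in \<open>K\<close> spans a \<open>(d+1)\<close>-clique with them, so its
  \<open>d\<close> edges into \<open>K\<close> contribute at most \<open>d + 1 \<le> r\<close>. An edge inside \<open>W\<close> has a
  clique number in \<open>G\<close> at least its clique number in \<open>G[W]\<close>, so these edges contribute at
  most \<open>|W|\<^sup>2/2\<close> by induction, and the three bounds add up to \<open>(r + |W|)\<^sup>2/2\<close>.

  In the equality case \<open>r \<ge> 2\<close>, every vertex of \<open>W\<close> misses exactly one vertex of \<open>K\<close>,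
  and \<open>G[W]\<close> is balanced complete multipartite with clique numbers unchanged in \<open>G\<close>.
  Extending a transversal of its parts by the vertices of \<open>K\<close> it does not miss gives a
  clique through an edge of \<open>G[W]\<close>; hence the missed vertex is a bijection from each
  transversal onto \<open>K\<close>, it is constant exactly on the parts, and \<open>G\<close> is the balanced
  complete multipartite graph whose parts are the vertices of \<open>K\<close>, each joined with the
  part of \<open>W\<close> missing it. Conversely, in a balanced complete \<open>k\<close>-partite graph on \<open>n\<close>
  vertices every edge has \<open>c = k\<close> and there are \<open>n\<^sup>2(k - 1)/(2k)\<close> edges.
\<close>

section \<open>Cliques and clique numbers\<close>

lemma simple_graph_finite_edges: "simple_graph V E \<Longrightarrow> finite E"
  unfolding simple_graph_def by (meson Pow_iff finite_Pow_iff finite_subset subsetI)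

lemma simple_graph_edgeE:
  assumes "simple_graph V E" "e \<in> E"
  obtains u v where "e = {u, v}" "u \<noteq> v" "u \<in> V" "v \<in> V"
  using assms unfolding simple_graph_def by (metis card_2_iff insert_subset)

lemma simple_graph_no_loop: "simple_graph V E \<Longrightarrow> {u} \<notin> E"
  unfolding simple_graph_def by fastforce

lemma is_clique_finite: "simple_graph V E \<Longrightarrow> is_clique V E K \<Longrightarrow> finite K"
  unfolding simple_graph_def is_clique_def using finite_subset by blast

lemma is_clique_card_le: "simple_graph V E \<Longrightarrow> is_clique V E K \<Longrightarrow> card K \<le> card V"
  unfolding simple_graph_def is_clique_def by (simp add: card_mono)

lemma edge_is_clique: "simple_graph V E \<Longrightarrow> e \<in> E \<Longrightarrow> is_clique V E e"
  by (elim simple_graph_edgeE) (auto simp: is_clique_def insert_commute)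

lemma singleton_is_clique: "v \<in> V \<Longrightarrow> is_clique V E {v}"
  by (simp add: is_clique_def)

lemma finite_clique_sizes: "simple_graph V E \<Longrightarrow> finite {card K |K. is_clique V E K \<and> P K}"
  by (rule finite_subset[of _ "{..card V}"]) (auto dest: is_clique_card_le)

lemma edge_clique_num_ge:
  "simple_graph V E \<Longrightarrow> is_clique V E K \<Longrightarrow> e \<subseteq> K \<Longrightarrow> card K \<le> edge_clique_num V E e"
  unfolding edge_clique_num_def
  by (rule Max_ge[OF finite_clique_sizes[of V E "\<lambda>K. e \<subseteq> K"]]) blast+

lemma edge_clique_numE:
  assumes "simple_graph V E" "e \<in> E"
  obtains K where "is_clique V E K" "e \<subseteq> K" "card K = edge_clique_num V E e"
proof -
  have "{card K |K. is_clique V E K \<and> e \<subseteq> K} \<noteq> {}"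
    using edge_is_clique[OF assms] by blast
  from Max_in[OF finite_clique_sizes[OF assms(1)] this] show ?thesis
    using that unfolding edge_clique_num_def by auto
qed

lemma edge_clique_num_ge_2: "simple_graph V E \<Longrightarrow> e \<in> E \<Longrightarrow> 2 \<le> edge_clique_num V E e"
  by (metis edge_clique_num_ge edge_is_clique order.refl simple_graph_def)

lemma maximum_clique_exists:
  assumes "simple_graph V E"
  obtains K where "is_clique V E K" "\<And>K'. is_clique V E K' \<Longrightarrow> card K' \<le> card K"
proof -
  let ?sizes = "{card K |K. is_clique V E K}"
  have fin: "finite ?sizes" using finite_clique_sizes[OF assms, of "\<lambda>_. True"] by simp
  moreover have "?sizes \<noteq> {}"
    unfolding is_clique_def by blast
  ultimately have "Max ?sizes \<in> ?sizes" by (rule Max_in)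
  then obtain K where K: "is_clique V E K" "card K = Max ?sizes" by auto
  have "card K' \<le> card K" if "is_clique V E K'" for K'
    unfolding K(2) using that by (intro Max_ge[OF fin]) blast
  with K(1) show ?thesis by (rule that)
qed

definition induced_edges :: "'a set set \<Rightarrow> 'a set \<Rightarrow> 'a set set" where
  "induced_edges E W = {e \<in> E. e \<subseteq> W}"

lemma simple_graph_induced: "simple_graph V E \<Longrightarrow> W \<subseteq> V \<Longrightarrow> simple_graph W (induced_edges E W)"
  unfolding simple_graph_def induced_edges_def using finite_subset by auto

lemma is_clique_of_induced:
  "W \<subseteq> V \<Longrightarrow> is_clique W (induced_edges E W) K \<Longrightarrow> is_clique V E K"
  unfolding is_clique_def induced_edges_def by auto

lemma edge_clique_num_induced_le:
  assumes "simple_graph V E" "W \<subseteq> V" "e \<in> induced_edges E W"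
  shows "edge_clique_num W (induced_edges E W) e \<le> edge_clique_num V E e"
proof -
  obtain K where "is_clique W (induced_edges E W) K" "e \<subseteq> K"
    "card K = edge_clique_num W (induced_edges E W) e"
    using edge_clique_numE[OF simple_graph_induced[OF assms(1,2)] assms(3)] .
  moreover have "is_clique V E K" using is_clique_of_induced assms(2) calculation(1) .
  ultimately show ?thesis using edge_clique_num_ge[OF assms(1)] by metis
qed

definition clique_weight :: "'a set \<Rightarrow> 'a set set \<Rightarrow> 'a set \<Rightarrow> real" where
  "clique_weight V E e = real (edge_clique_num V E e) / (real (edge_clique_num V E e) - 1)"

definition total_clique_weight :: "'a set \<Rightarrow> 'a set set \<Rightarrow> real" where
  "total_clique_weight V E = (\<Sum>e\<in>E. clique_weight V E e)"

lemma div_pred_antimono: "2 \<le> x \<Longrightarrow> x \<le> y \<Longrightarrow> y / (y - 1) \<le> x / (x - 1 :: real)"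
  by (simp add: field_simps)

lemma div_pred_inj: "2 \<le> x \<Longrightarrow> 2 \<le> y \<Longrightarrow> y / (y - 1) = x / (x - 1 :: real) \<Longrightarrow> x = y"
  by (simp add: field_simps)

lemma clique_weight_le_induced:
  assumes "simple_graph V E" "W \<subseteq> V" "e \<in> induced_edges E W"
  shows "clique_weight V E e \<le> clique_weight W (induced_edges E W) e"
  unfolding clique_weight_def
  using edge_clique_num_induced_le[OF assms]
    edge_clique_num_ge_2[OF simple_graph_induced[OF assms(1,2)] assms(3)]
  by (intro div_pred_antimono) auto

lemma clique_weight_eq_induced_imp:
  assumes "simple_graph V E" "W \<subseteq> V" "e \<in> induced_edges E W"
    and "clique_weight V E e = clique_weight W (induced_edges E W) e"
  shows "edge_clique_num V E e = edge_clique_num W (induced_edges E W) e"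
proof -
  have "2 \<le> edge_clique_num W (induced_edges E W) e"
    using edge_clique_num_ge_2[OF simple_graph_induced[OF assms(1,2)] assms(3)] .
  moreover have "edge_clique_num W (induced_edges E W) e \<le> edge_clique_num V E e"
    using edge_clique_num_induced_le[OF assms(1-3)] .
  moreover note div_pred_inj[of "real (edge_clique_num W (induced_edges E W) e)"
      "real (edge_clique_num V E e)"]
  ultimately show ?thesis using assms(4) unfolding clique_weight_def by simp
qed

lemma sum_clique_weight_le_induced:
  assumes "simple_graph V E" "W \<subseteq> V"
  shows "(\<Sum>e\<in>induced_edges E W. clique_weight V E e) \<le> total_clique_weight W (induced_edges E W)"
  unfolding total_clique_weight_def using clique_weight_le_induced[OF assms] by (rule sum_mono)

lemma real_choose_two: "real (n choose 2) = real n * (real n - 1) / 2"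
proof -
  have "2 * (n choose 2) = n * (n - 1)"
    by (induction n) (auto simp: choose_two algebra_simps)
  then have "2 * real (n choose 2) = real (n * (n - 1))"
    by (metis of_nat_mult of_nat_numeral)
  then show ?thesis by (cases n) (auto simp: field_simps)
qed

definition neighbours_in :: "'a set set \<Rightarrow> 'a set \<Rightarrow> 'a \<Rightarrow> 'a set" where
  "neighbours_in E K v = {k \<in> K. {v, k} \<in> E}"

lemma edges_across_eq_image:
  assumes "simple_graph V E"
  shows "{e\<in>E. \<not> e \<subseteq> K \<and> \<not> e \<subseteq> V - K}
    = (\<lambda>(v, k). {v, k}) ` (SIGMA v:V - K. neighbours_in E K v)"
proof
  show "{e\<in>E. \<not> e \<subseteq> K \<and> \<not> e \<subseteq> V - K} \<subseteq> (\<lambda>(v, k). {v, k}) ` (SIGMA v:V - K. neighbours_in E K v)"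
  proof
    fix e assume e: "e \<in> {e\<in>E. \<not> e \<subseteq> K \<and> \<not> e \<subseteq> V - K}"
    then obtain a b where ab: "e = {a, b}" "a \<in> V" "b \<in> V"
      by (metis mem_Collect_eq simple_graph_edgeE[OF assms])
    have "a \<in> K \<and> b \<in> V - K \<or> a \<in> V - K \<and> b \<in> K"
      using e ab by auto
    then obtain v k where "v \<in> V - K" "k \<in> K" "e = {v, k}"
      using ab by (auto simp: insert_commute)
    then have "(v, k) \<in> (SIGMA v:V - K. neighbours_in E K v)" "e = (\<lambda>(v, k). {v, k}) (v, k)"
      using e by (simp_all add: neighbours_in_def)
    then show "e \<in> (\<lambda>(v, k). {v, k}) ` (SIGMA v:V - K. neighbours_in E K v)" by (rule rev_image_eqI)
  qed
  show "(\<lambda>(v, k). {v, k}) ` (SIGMA v:V - K. neighbours_in E K v) \<subseteq> {e\<in>E. \<not> e \<subseteq> K \<and> \<not> e \<subseteq> V - K}"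
    unfolding neighbours_in_def by auto
qed

lemma sum_edges_split:
  fixes g :: "'a set \<Rightarrow> real"
  assumes "simple_graph V E" "K \<subseteq> V"
  shows "(\<Sum>e\<in>E. g e) = (\<Sum>e\<in>induced_edges E K. g e)
    + (\<Sum>v\<in>V - K. \<Sum>k\<in>neighbours_in E K v. g {v, k})
    + (\<Sum>e\<in>induced_edges E (V - K). g e)"
proof -
  define across where "across = {e\<in>E. \<not> e \<subseteq> K \<and> \<not> e \<subseteq> V - K}"
  have finE: "finite E" using simple_graph_finite_edges[OF assms(1)] .
  have finK: "finite K"
    using finite_subset[OF assms(2)] assms(1) by (simp add: simple_graph_def)
  have nonempty: "{} \<notin> E" using assms(1) unfolding simple_graph_def by fastforce
  have fin: "finite (induced_edges E K)" "finite across" "finite (induced_edges E (V - K))"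
    using finE unfolding across_def induced_edges_def by auto
  have E_split: "E = (induced_edges E K \<union> across) \<union> induced_edges E (V - K)"
    unfolding across_def induced_edges_def by blast
  have disj1: "induced_edges E K \<inter> across = {}"
    unfolding across_def induced_edges_def by blast
  have disj2: "(induced_edges E K \<union> across) \<inter> induced_edges E (V - K) = {}"
  proof -
    have "e = {}" if "e \<subseteq> K" "e \<subseteq> V - K" for e :: "'a set" using that by blast
    then show ?thesis using nonempty unfolding across_def induced_edges_def by auto
  qed
  have split: "(\<Sum>e\<in>E. g e) = (\<Sum>e\<in>induced_edges E K. g e) + (\<Sum>e\<in>across. g e)
      + (\<Sum>e\<in>induced_edges E (V - K). g e)"
    by (subst E_split, subst sum.union_disjoint[OF _ fin(3) disj2], use fin in simp)
      (simp add: sum.union_disjoint[OF fin(1,2) disj1])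
  have "inj_on (\<lambda>(v, k). {v, k}) (SIGMA v:V - K. neighbours_in E K v)"
    unfolding neighbours_in_def by (auto simp: inj_on_def doubleton_eq_iff)
  then have "(\<Sum>e\<in>across. g e) = (\<Sum>(v, k)\<in>(SIGMA v:V - K. neighbours_in E K v). g {v, k})"
    unfolding across_def edges_across_eq_image[OF assms(1)]
    by (simp add: sum.reindex case_prod_unfold)
  also have "\<dots> = (\<Sum>v\<in>V - K. \<Sum>k\<in>neighbours_in E K v. g {v, k})"
    using assms(1) finK by (subst sum.Sigma) (auto simp: simple_graph_def neighbours_in_def)
  finally show ?thesis using split by simp
qed

section \<open>The bound via a maximum clique\<close>

locale max_clique =
  fixes V :: "'a set" and E :: "'a set set" and K :: "'a set"
  assumes simple: "simple_graph V E"
    and clique: "is_clique V E K"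
    and maximum: "\<And>K'. is_clique V E K' \<Longrightarrow> card K' \<le> card K"
begin

lemma K_subset: "K \<subseteq> V"
  using clique by (simp add: is_clique_def)

lemma finite_K: "finite K"
  using is_clique_finite[OF simple clique] .

lemma edge_clique_num_in_K:
  assumes "e \<in> induced_edges E K"
  shows "edge_clique_num V E e = card K"
proof (rule antisym)
  obtain K' where "is_clique V E K'" "card K' = edge_clique_num V E e"
    using edge_clique_numE[OF simple] assms unfolding induced_edges_def by blast
  then show "edge_clique_num V E e \<le> card K" using maximum by metis
  show "card K \<le> edge_clique_num V E e"
    using assms edge_clique_num_ge[OF simple clique] unfolding induced_edges_def by blast
qed

lemma clique_edges_weight:
  "(\<Sum>e\<in>induced_edges E K. clique_weight V E e) = (if 2 \<le> card K then real (card K)^2 / 2 else 0)"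
proof -
  have edges: "induced_edges E K = {e. e \<subseteq> K \<and> card e = 2}"
    using simple clique unfolding induced_edges_def simple_graph_def is_clique_def
    by (auto simp: card_2_iff)
  have "(\<Sum>e\<in>induced_edges E K. clique_weight V E e)
      = (\<Sum>e\<in>induced_edges E K. real (card K) / (real (card K) - 1))"
    by (rule sum.cong) (simp_all add: clique_weight_def edge_clique_num_in_K)
  also have "\<dots> = real (card K choose 2) * (real (card K) / (real (card K) - 1))"
    unfolding edges by (simp add: n_subsets[OF finite_K])
  also have "\<dots> = (if 2 \<le> card K then real (card K)^2 / 2 else 0)"
    by (auto simp: real_choose_two power2_eq_square field_simps not_le less_2_cases_iff)
  finally show ?thesis .
qed

lemma card_neighbours_less:
  assumes "v \<in> V - K"
  shows "card (neighbours_in E K v) < card K"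
proof -
  have "is_clique V E (insert v (neighbours_in E K v))"
    using clique assms unfolding is_clique_def neighbours_in_def by (auto simp: insert_commute)
  then have "card (insert v (neighbours_in E K v)) \<le> card K" by (rule maximum)
  moreover have "finite (neighbours_in E K v)" using finite_K by (simp add: neighbours_in_def)
  ultimately show ?thesis using assms by (simp add: neighbours_in_def)
qed

lemma neighbour_weight_le:
  assumes "v \<in> V - K"
  defines "N \<equiv> neighbours_in E K v"
  shows "(\<Sum>k\<in>N. clique_weight V E {v, k}) \<le> card K
    \<and> ((\<Sum>k\<in>N. clique_weight V E {v, k}) = card K \<longrightarrow> card N = card K - 1)"
proof (cases "N = {}")
  case True
  then show ?thesis by simp
next
  case False
  have finN: "finite N" using finite_K by (simp add: N_def neighbours_in_def)
  then have pos: "1 \<le> card N" using False by (simp add: Suc_le_eq card_gt_0_iff)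
  have N_clique: "is_clique V E (insert v N)"
    using clique assms unfolding is_clique_def N_def neighbours_in_def by (auto simp: insert_commute)
  have card_insert: "card (insert v N) = card N + 1"
    using assms finN by (simp add: N_def neighbours_in_def)
  have "clique_weight V E {v, k} \<le> (card N + 1) / card N" if "k \<in> N" for k
  proof -
    have "card N + 1 \<le> edge_clique_num V E {v, k}"
      using edge_clique_num_ge[OF simple N_clique, of "{v, k}"] that card_insert by auto
    then have "clique_weight V E {v, k} \<le> real (card N + 1) / (real (card N + 1) - 1)"
      unfolding clique_weight_def using pos by (intro div_pred_antimono) auto
    then show ?thesis by simp
  qed
  then have "(\<Sum>k\<in>N. clique_weight V E {v, k}) \<le> card N * ((card N + 1) / card N)"
    using sum_mono[of N _ "\<lambda>_. (card N + 1) / card N"] by simp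
  also have "\<dots> = card N + 1" using pos by simp
  finally show ?thesis
    using card_neighbours_less[OF assms(1)] unfolding N_def by linarith
qed

lemma cross_weight_le:
  "(\<Sum>v\<in>V - K. \<Sum>k\<in>neighbours_in E K v. clique_weight V E {v, k}) \<le> real (card (V - K)) * card K"
  using sum_mono[of "V - K" _ "\<lambda>_. real (card K)"] neighbour_weight_le by simp

lemma clique_edges_weight_le: "(\<Sum>e\<in>induced_edges E K. clique_weight V E e) \<le> real (card K)^2 / 2"
  by (simp add: clique_edges_weight)

theorem total_clique_weight_le:
  "total_clique_weight V E
    \<le> real (card K)^2 / 2 + real (card (V - K)) * card K
      + total_clique_weight (V - K) (induced_edges E (V - K))"
  using sum_edges_split[OF simple K_subset, of "clique_weight V E"] clique_edges_weight_le
    cross_weight_le sum_clique_weight_le_induced[OF simple Diff_subset[of V K]]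
  unfolding total_clique_weight_def[of V] by linarith

lemma total_clique_weight_eq_imp_tight:
  assumes "K \<noteq> {}"
    and eq: "total_clique_weight V E = real (card K)^2 / 2 + real (card (V - K)) * card K
      + total_clique_weight (V - K) (induced_edges E (V - K))"
  shows "2 \<le> card K"
    and "\<And>v. v \<in> V - K \<Longrightarrow> card (neighbours_in E K v) = card K - 1"
    and "\<And>e. e \<in> induced_edges E (V - K) \<Longrightarrow>
      edge_clique_num V E e = edge_clique_num (V - K) (induced_edges E (V - K)) e"
proof -
  let ?cross = "\<lambda>v. \<Sum>k\<in>neighbours_in E K v. clique_weight V E {v, k}"
  let ?E' = "induced_edges E (V - K)"
  have finite_outside: "finite (V - K)" using simple by (simp add: simple_graph_def)
  have inner_sum: "(\<Sum>e\<in>induced_edges E K. clique_weight V E e) = real (card K)^2 / 2"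
    and cross_sum: "(\<Sum>v\<in>V - K. ?cross v) = (\<Sum>v\<in>V - K. real (card K))"
    and outer_sum: "(\<Sum>e\<in>?E'. clique_weight V E e) = (\<Sum>e\<in>?E'. clique_weight (V - K) ?E' e)"
    using eq sum_edges_split[OF simple K_subset, of "clique_weight V E"] clique_edges_weight_le
      cross_weight_le sum_clique_weight_le_induced[OF simple Diff_subset[of V K]]
    unfolding total_clique_weight_def by simp_all
  show "2 \<le> card K"
    using inner_sum clique_edges_weight assms(1) finite_K by (auto split: if_splits)
  show "card (neighbours_in E K v) = card K - 1" if "v \<in> V - K" for v
    using sum_mono_inv[OF cross_sum _ that finite_outside] neighbour_weight_le that by blast
  show "edge_clique_num V E e = edge_clique_num (V - K) ?E' e" if "e \<in> ?E'" for e
    using sum_mono_inv[OF outer_sum _ that] clique_weight_le_induced[OF simple Diff_subset]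
      clique_weight_eq_induced_imp[OF simple Diff_subset that] finite_outside
      simple_graph_finite_edges[OF simple_graph_induced[OF simple Diff_subset[of V K]]]
    by blast
qed

end

section \<open>Complete multipartite graphs\<close>

definition complete_multipartite_wrt :: "'a set \<Rightarrow> 'a set set \<Rightarrow> 'a set set \<Rightarrow> bool" where
  "complete_multipartite_wrt V E P \<longleftrightarrow> partition_on V P \<and>
    (\<forall>u\<in>V. \<forall>v\<in>V. {u, v} \<in> E \<longleftrightarrow> u \<noteq> v \<and> \<not> (\<exists>A\<in>P. u \<in> A \<and> v \<in> A))"

lemma balanced_complete_multipartite_iff:
  "balanced_complete_multipartite V E \<longleftrightarrow>
    (\<exists>P. complete_multipartite_wrt V E P \<and> 2 \<le> card P \<and> (\<forall>A\<in>P. \<forall>B\<in>P. card A = card B))"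
  unfolding balanced_complete_multipartite_def complete_multipartite_wrt_def
  by (rule ex_cong1) auto

lemma partition_on_part_unique:
  "partition_on V P \<Longrightarrow> A \<in> P \<Longrightarrow> B \<in> P \<Longrightarrow> x \<in> A \<Longrightarrow> x \<in> B \<Longrightarrow> A = B"
  unfolding partition_on_def pairwise_def disjnt_def by blast

lemma partition_on_partE:
  assumes "partition_on V P" "x \<in> V"
  obtains A where "A \<in> P" "x \<in> A"
  using assms unfolding partition_on_def by blast

lemma partition_on_choice:
  assumes "partition_on V P"
  obtains h where "\<forall>B\<in>P. h B \<in> B"
proof -
  have "\<forall>B\<in>P. \<exists>x. x \<in> B" using partition_onD3[OF assms] by (metis ex_in_conv)
  from bchoice[OF this] obtain h where "\<forall>B\<in>P. h B \<in> B" ..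
  then show ?thesis by (rule that)
qed

lemma sum_card_edges_eq_sum_degrees:
  assumes "finite V" "finite E" "\<forall>e\<in>E. e \<subseteq> V"
  shows "(\<Sum>e\<in>E. card e) = (\<Sum>u\<in>V. card {e\<in>E. u \<in> e})"
proof -
  have "(\<Sum>e\<in>E. card e) = (\<Sum>e\<in>E. \<Sum>u\<in>V. if u \<in> e then 1 else 0)"
  proof (rule sum.cong)
    fix e assume "e \<in> E"
    then have "V \<inter> {u. u \<in> e} = e" using assms(3) by blast
    then show "card e = (\<Sum>u\<in>V. if u \<in> e then 1 else 0)" using assms(1) by (simp add: sum.If_cases)
  qed simp
  also have "\<dots> = (\<Sum>u\<in>V. \<Sum>e\<in>E. if u \<in> e then 1 else 0)" by (rule sum.swap)
  also have "\<dots> = (\<Sum>u\<in>V. card {e\<in>E. u \<in> e})"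
  proof (rule sum.cong)
    fix u
    have "E \<inter> {e. u \<in> e} = {e\<in>E. u \<in> e}" by blast
    then show "(\<Sum>e\<in>E. if u \<in> e then 1 else 0) = card {e\<in>E. u \<in> e}"
      using assms(2) by (simp add: sum.If_cases)
  qed simp
  finally show ?thesis .
qed

locale complete_multipartite =
  fixes V :: "'a set" and E :: "'a set set" and P :: "'a set set"
  assumes simple: "simple_graph V E"
    and multipartite: "complete_multipartite_wrt V E P"
begin

lemma partition: "partition_on V P"
  using multipartite by (simp add: complete_multipartite_wrt_def)

lemma adjacent_iff: "u \<in> V \<Longrightarrow> v \<in> V \<Longrightarrow> {u, v} \<in> E \<longleftrightarrow> u \<noteq> v \<and> \<not> (\<exists>A\<in>P. u \<in> A \<and> v \<in> A)"
  using multipartite by (simp add: complete_multipartite_wrt_def)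

lemma finite_P: "finite P"
  using finite_elements[OF _ partition] simple by (simp add: simple_graph_def)

lemma part_subset: "A \<in> P \<Longrightarrow> A \<subseteq> V"
  using partition_onD1[OF partition] by blast

lemma clique_card_le:
  assumes "is_clique V E C"
  shows "card C \<le> card P"
proof -
  define part where "part y = (SOME A. A \<in> P \<and> y \<in> A)" for y
  have CV: "C \<subseteq> V" using assms by (simp add: is_clique_def)
  have part: "part y \<in> P \<and> y \<in> part y" if "y \<in> C" for y
    unfolding part_def using that CV
    by (metis (no_types, lifting) partition_on_partE[OF partition] someI_ex subsetD)
  have "inj_on part C"
  proof (rule inj_onI, rule ccontr)
    fix x y assume xy: "x \<in> C" "y \<in> C" "part x = part y" "x \<noteq> y"
    then have "{x, y} \<in> E" using assms by (simp add: is_clique_def)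
    moreover have "part x \<in> P" "x \<in> part x" "y \<in> part x" using part xy by metis+
    ultimately show False using adjacent_iff CV xy(1,2) by blast
  qed
  moreover have "part ` C \<subseteq> P" using part by blast
  ultimately show ?thesis using card_inj_on_le finite_P by blast
qed

lemma transversal_clique:
  assumes "\<forall>B\<in>P. h B \<in> B"
  shows "is_clique V E (h ` P)" and "card (h ` P) = card P"
proof -
  show "is_clique V E (h ` P)"
    unfolding is_clique_def
  proof (intro conjI ballI impI)
    show "h ` P \<subseteq> V" using assms part_subset by blast
    fix x y assume "x \<in> h ` P" "y \<in> h ` P" "x \<noteq> y"
    then obtain A B where AB: "A \<in> P" "B \<in> P" "x = h A" "y = h B" "A \<noteq> B" by blast
    then have "\<not> (\<exists>C\<in>P. x \<in> C \<and> y \<in> C)"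
      using assms partition_on_part_unique[OF partition] by metis
    moreover have "x \<in> V" "y \<in> V" using AB assms part_subset by blast+
    ultimately show "{x, y} \<in> E" using adjacent_iff \<open>x \<noteq> y\<close> by blast
  qed
  have "inj_on h P"
    using assms partition_on_part_unique[OF partition] by (metis inj_onI)
  then show "card (h ` P) = card P" by (rule card_image)
qed

lemma edge_clique_num_eq:
  assumes "e \<in> E"
  shows "edge_clique_num V E e = card P"
proof (rule antisym)
  obtain C where "is_clique V E C" "card C = edge_clique_num V E e"
    using edge_clique_numE[OF simple assms] by blast
  then show "edge_clique_num V E e \<le> card P" using clique_card_le by metis
next
  obtain u v where uv: "e = {u, v}" "u \<noteq> v" "u \<in> V" "v \<in> V"
    using simple_graph_edgeE[OF simple assms] by blast
  obtain Au Av where parts: "Au \<in> P" "u \<in> Au" "Av \<in> P" "v \<in> Av"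
    using partition_on_partE[OF partition] uv(3,4) by metis
  then have "Au \<noteq> Av" using adjacent_iff assms uv by blast
  obtain h0 where h0: "\<forall>B\<in>P. h0 B \<in> B" using partition_on_choice[OF partition] .
  define h where "h = h0(Au := u, Av := v)"
  have h: "\<forall>B\<in>P. h B \<in> B" using h0 parts by (simp add: h_def)
  have "e \<subseteq> h ` P"
    using parts \<open>Au \<noteq> Av\<close> uv(1) unfolding h_def by (auto intro!: image_eqI)
  then show "card P \<le> edge_clique_num V E e"
    using edge_clique_num_ge[OF simple transversal_clique(1)[OF h]] transversal_clique(2)[OF h]
    by simp
qed

lemma degree:
  assumes "A \<in> P" "u \<in> A"
  shows "card {e\<in>E. u \<in> e} = card V - card A"
proof -
  have uV: "u \<in> V" using assms part_subset by blast
  have "{e\<in>E. u \<in> e} = (\<lambda>v. {u, v}) ` (V - A)"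
  proof
    show "{e\<in>E. u \<in> e} \<subseteq> (\<lambda>v. {u, v}) ` (V - A)"
    proof
      fix e assume e: "e \<in> {e\<in>E. u \<in> e}"
      then obtain a b where ab: "e = {a, b}" "a \<in> V" "b \<in> V"
        by (metis (no_types, lifting) mem_Collect_eq simple_graph_edgeE[OF simple])
      define v where "v = (if a = u then b else a)"
      have v: "e = {u, v}" "v \<in> V" using ab e by (auto simp: v_def insert_commute)
      then have "v \<notin> A" using e adjacent_iff[OF uV] assms by blast
      then show "e \<in> (\<lambda>v. {u, v}) ` (V - A)" using v by blast
    qed
    show "(\<lambda>v. {u, v}) ` (V - A) \<subseteq> {e\<in>E. u \<in> e}"
      using adjacent_iff[OF uV] partition_on_part_unique[OF partition] assms by blast
  qed
  moreover have "inj_on (\<lambda>v. {u, v}) (V - A)" by (auto simp: inj_on_def doubleton_eq_iff)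
  ultimately have "card {e\<in>E. u \<in> e} = card (V - A)" by (simp add: card_image)
  also have "\<dots> = card V - card A"
    using part_subset[OF assms(1)] simple by (simp add: card_Diff_subset finite_subset simple_graph_def)
  finally show ?thesis .
qed

end

theorem balanced_complete_multipartite_total_clique_weight:
  assumes simple: "simple_graph V E" and "balanced_complete_multipartite V E"
  shows "total_clique_weight V E = real (card V)^2 / 2"
proof -
  obtain P where multipartite: "complete_multipartite_wrt V E P" and "2 \<le> card P"
    and balanced: "\<forall>A\<in>P. \<forall>B\<in>P. card A = card B"
    using assms(2) unfolding balanced_complete_multipartite_iff by blast
  interpret complete_multipartite V E P using simple multipartite by unfold_locales
  define k where "k = card P"
  have "P \<noteq> {}" using \<open>2 \<le> card P\<close> by (metis card.empty not_numeral_le_zero)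
  then obtain A0 where "A0 \<in> P" by blast
  define s where "s = card A0"
  have part_card: "card A = s" if "A \<in> P" for A using balanced \<open>A0 \<in> P\<close> that s_def by blast
  have finV: "finite V" using simple by (simp add: simple_graph_def)
  have card_V: "card V = k * s"
    using product_partition[OF partition] part_card finite_subset[OF part_subset finV]
    by (simp add: k_def)
  have "2 * card E = (\<Sum>e\<in>E. card e)"
    using simple by (simp add: simple_graph_def)
  also have "\<dots> = (\<Sum>u\<in>V. card {e\<in>E. u \<in> e})"
    using sum_card_edges_eq_sum_degrees[OF finV simple_graph_finite_edges[OF simple]] simple
    by (simp add: simple_graph_def)
  also have "\<dots> = (\<Sum>u\<in>V. card V - s)"
  proof (rule sum.cong)
    fix u assume "u \<in> V"
    then obtain A where "A \<in> P" "u \<in> A" using partition_on_partE[OF partition] by blast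
    then show "card {e\<in>E. u \<in> e} = card V - s" using degree part_card by simp
  qed simp
  finally have "2 * card E = card V * (card V - s)" by simp
  then have "real (2 * card E) = real (card V * (card V - s))" by (rule arg_cong)
  moreover have "s \<le> card V" using card_V \<open>2 \<le> card P\<close> k_def by simp
  ultimately have edges: "2 * real (card E) = real k * real s * (real k * real s - real s)"
    unfolding card_V by (simp add: of_nat_diff)
  have "real k - 1 \<noteq> 0" using \<open>2 \<le> card P\<close> k_def by simp
  moreover have "total_clique_weight V E = real (card E) * (real k / (real k - 1))"
    unfolding total_clique_weight_def clique_weight_def by (simp add: edge_clique_num_eq k_def)
  ultimately have "total_clique_weight V E * (real k - 1) = real (card E) * real k" by simp
  then have "2 * total_clique_weight V E * (real k - 1) = 2 * real (card E) * real k"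
    by simp
  also have "\<dots> = (real k * real s)^2 * (real k - 1)"
    unfolding edges by (simp add: algebra_simps power2_eq_square)
  finally show ?thesis unfolding card_V using \<open>real k - 1 \<noteq> 0\<close> by simp
qed

lemma complete_multipartite_wrt_fibres:
  assumes "\<forall>x\<in>V. g x \<in> K" "\<forall>k\<in>K. k \<in> V \<and> g k = k"
    and "\<forall>u\<in>V. \<forall>v\<in>V. {u, v} \<in> E \<longleftrightarrow> u \<noteq> v \<and> g u \<noteq> g v"
  shows "complete_multipartite_wrt V E ((\<lambda>k. {x\<in>V. g x = k}) ` K)"
  unfolding complete_multipartite_wrt_def
proof (intro conjI ballI)
  show "partition_on V ((\<lambda>k. {x\<in>V. g x = k}) ` K)"
    using assms(1,2) by (intro partition_onI) (auto simp: disjnt_def)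
  fix u v assume "u \<in> V" "v \<in> V"
  then show "{u, v} \<in> E \<longleftrightarrow> u \<noteq> v \<and> \<not> (\<exists>A\<in>(\<lambda>k. {x\<in>V. g x = k}) ` K. u \<in> A \<and> v \<in> A)"
    using assms by auto
qed

lemma balanced_complete_multipartite_blowup:
  assumes simple: "simple_graph V E" and clique: "is_clique V E K" and "2 \<le> card K"
    and f: "\<forall>v\<in>V - K. f v \<in> K"
    and cross: "\<forall>v\<in>V - K. \<forall>k\<in>K. {v, k} \<in> E \<longleftrightarrow> k \<noteq> f v"
    and outside: "\<forall>u\<in>V - K. \<forall>v\<in>V - K. u \<noteq> v \<longrightarrow> ({u, v} \<in> E \<longleftrightarrow> f u \<noteq> f v)"
    and fibres: "\<forall>k\<in>K. \<forall>k'\<in>K. card {v\<in>V - K. f v = k} = card {v\<in>V - K. f v = k'}"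
  shows "balanced_complete_multipartite V E"
proof -
  define g where "g x = (if x \<in> K then x else f x)" for x
  define part where "part k = {x\<in>V. g x = k}" for k
  have KV: "K \<subseteq> V" using clique by (simp add: is_clique_def)
  have adjacent: "{u, v} \<in> E \<longleftrightarrow> u \<noteq> v \<and> g u \<noteq> g v" if "u \<in> V" "v \<in> V" for u v
  proof (cases "u = v")
    case True
    then show ?thesis using simple_graph_no_loop[OF simple] by simp
  next
    case False
    have clique_adj: "{u, v} \<in> E" if "u \<in> K" "v \<in> K" "u \<noteq> v" for u v
      using clique that by (simp add: is_clique_def)
    have cross': "{k, v} \<in> E \<longleftrightarrow> k \<noteq> f v" if "v \<in> V - K" "k \<in> K" for v k
      using cross that insert_commute[of k v] by simp
    from False that show ?thesis
      using cross cross' outside clique_adj unfolding g_def by (cases "u \<in> K"; cases "v \<in> K") auto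
  qed
  have part_eq: "part k = insert k {v\<in>V - K. f v = k}" if "k \<in> K" for k
    using that KV f unfolding part_def g_def by auto
  have "complete_multipartite_wrt V E (part ` K)"
    unfolding part_def using f KV adjacent
    by (intro complete_multipartite_wrt_fibres) (auto simp: g_def)
  moreover have "inj_on part K"
  proof (rule inj_onI)
    fix k k' assume "k \<in> K" "k' \<in> K" "part k = part k'"
    then have "k \<in> part k'" using part_eq by blast
    then show "k = k'" using \<open>k \<in> K\<close> unfolding part_def g_def by simp
  qed
  then have "card (part ` K) = card K" by (rule card_image)
  moreover have "card (part k) = card (part k')" if "k \<in> K" "k' \<in> K" for k k'
  proof -
    have "finite {v\<in>V - K. f v = k}" for k using simple by (simp add: simple_graph_def)
    then show ?thesis using fibres[rule_format, OF that] that by (simp add: part_eq)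
  qed
  ultimately show ?thesis
    unfolding balanced_complete_multipartite_iff using \<open>2 \<le> card K\<close> by (metis imageE)
qed

section \<open>The equality case\<close>

locale tight_clique = max_clique +
  assumes two_le_card_K: "2 \<le> card K"
    and card_neighbours_in: "\<And>v. v \<in> V - K \<Longrightarrow> card (neighbours_in E K v) = card K - 1"
begin

definition missed :: "'a \<Rightarrow> 'a" where
  "missed v = the_elem (K - neighbours_in E K v)" \<comment> \<open>junk unless \<open>v \<in> V - K\<close>\<close>

lemma non_neighbours_eq:
  assumes "v \<in> V - K"
  shows "K - neighbours_in E K v = {missed v}"
proof -
  have "neighbours_in E K v \<subseteq> K" by (auto simp: neighbours_in_def)
  moreover have "finite (neighbours_in E K v)" using finite_K by (simp add: neighbours_in_def)
  ultimately have "card (K - neighbours_in E K v) = 1"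
    using card_neighbours_in[OF assms] two_le_card_K by (simp add: card_Diff_subset)
  then obtain a where "K - neighbours_in E K v = {a}" using card_1_singletonE by blast
  then show ?thesis by (simp add: missed_def)
qed

lemma missed_in_K: "v \<in> V - K \<Longrightarrow> missed v \<in> K"
  using non_neighbours_eq by blast

lemma adjacent_K_iff: "v \<in> V - K \<Longrightarrow> k \<in> K \<Longrightarrow> {v, k} \<in> E \<longleftrightarrow> k \<noteq> missed v"
  using non_neighbours_eq unfolding neighbours_in_def by blast

lemma clique_extend_unmissed:
  assumes "Q \<subseteq> V - K" "is_clique V E Q"
  shows "is_clique V E (Q \<union> (K - missed ` Q))"
  unfolding is_clique_def
proof (intro conjI ballI impI)
  show "Q \<union> (K - missed ` Q) \<subseteq> V" using assms(1) K_subset by blast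
  have cross: "{q, k} \<in> E" "{k, q} \<in> E" if "q \<in> Q" "k \<in> K - missed ` Q" for q k
  proof -
    show "{q, k} \<in> E" using adjacent_K_iff that assms(1) by blast
    then show "{k, q} \<in> E" by (simp add: insert_commute)
  qed
  fix x y assume "x \<in> Q \<union> (K - missed ` Q)" "y \<in> Q \<union> (K - missed ` Q)" "x \<noteq> y"
  then show "{x, y} \<in> E"
    using cross assms(2) clique unfolding is_clique_def by blast
qed

lemma missed_neq_if_adjacent:
  assumes "u \<in> V - K" "v \<in> V - K" "{u, v} \<in> E"
  shows "missed u \<noteq> missed v"
proof
  assume same: "missed u = missed v"
  have "u \<noteq> v" using assms(3) simple_graph_no_loop[OF simple] by auto
  have "is_clique V E {u, v}" using edge_is_clique[OF simple assms(3)] .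
  then have "is_clique V E ({u, v} \<union> (K - {missed u}))"
    using clique_extend_unmissed[of "{u, v}"] assms(1,2) same by simp
  then have "card ({u, v} \<union> (K - {missed u})) \<le> card K" by (rule maximum)
  moreover have "card ({u, v} \<union> (K - {missed u})) = card K + 1"
    using \<open>u \<noteq> v\<close> assms(1,2) missed_in_K[OF assms(1)] finite_K two_le_card_K
    by (subst card_Un_disjoint) auto
  ultimately show False by simp
qed

lemma balanced_if_no_outside:
  assumes "V - K = {}"
  shows "balanced_complete_multipartite V E"
proof (rule balanced_complete_multipartite_blowup[OF simple clique two_le_card_K, of missed])
  have no_fibres: "{v\<in>V - K. missed v = k} = {}" for k using assms by blast
  show "\<forall>k\<in>K. \<forall>k'\<in>K. card {v\<in>V - K. missed v = k} = card {v\<in>V - K. missed v = k'}"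
    unfolding no_fibres by simp
qed (use assms in blast)+

end

locale tight_clique_multipartite = tight_clique +
  fixes P :: "'a set set"
  assumes multipartite_outside: "complete_multipartite_wrt (V - K) (induced_edges E (V - K)) P"
    and two_le_card_P: "2 \<le> card P"
    and edge_clique_num_outside_le: "\<And>e. e \<in> induced_edges E (V - K) \<Longrightarrow> edge_clique_num V E e \<le> card P"
begin

sublocale outside: complete_multipartite "V - K" "induced_edges E (V - K)" P
  using simple_graph_induced[OF simple Diff_subset] multipartite_outside by unfold_locales

lemma adjacent_outside_iff:
  "u \<in> V - K \<Longrightarrow> v \<in> V - K \<Longrightarrow> {u, v} \<in> E \<longleftrightarrow> u \<noteq> v \<and> \<not> (\<exists>A\<in>P. u \<in> A \<and> v \<in> A)"
  using outside.adjacent_iff unfolding induced_edges_def by auto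

lemma transversal_missed_bij:
  assumes h: "\<forall>B\<in>P. h B \<in> B"
  shows "bij_betw missed (h ` P) K"
proof -
  let ?Q = "h ` P"
  have Q_outside: "?Q \<subseteq> V - K" using h outside.part_subset by blast
  have finite_Q: "finite ?Q" using outside.finite_P by simp
  have Q_clique: "is_clique V E ?Q"
    using is_clique_of_induced[OF Diff_subset outside.transversal_clique(1)[OF h]] .
  have card_Q: "card ?Q = card P" using outside.transversal_clique(2)[OF h] .
  then have "\<not> card ?Q \<le> Suc 0" using two_le_card_P by simp
  then obtain u x where ux: "u \<in> ?Q" "x \<in> ?Q" "u \<noteq> x"
    using card_le_Suc0_iff_eq[OF finite_Q] by blast
  then have edge: "{u, x} \<in> induced_edges E (V - K)"
    using Q_clique Q_outside unfolding is_clique_def induced_edges_def by auto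
  \<comment> \<open>extending the transversal by the vertices of \<open>K\<close> it does not miss gives a clique
     through the edge \<open>{u, x}\<close>, whose clique number is at most \<open>card P\<close>\<close>
  have "card ?Q + card (K - missed ` ?Q) = card (?Q \<union> (K - missed ` ?Q))"
    using Q_outside finite_Q finite_K by (subst card_Un_disjoint) auto
  also have "\<dots> \<le> edge_clique_num V E {u, x}"
    using edge_clique_num_ge[OF simple clique_extend_unmissed[OF Q_outside Q_clique]] ux by auto
  also have "\<dots> \<le> card ?Q" using edge_clique_num_outside_le[OF edge] card_Q by simp
  finally have "K - missed ` ?Q = {}" using finite_K by simp
  then have "K \<subseteq> missed ` ?Q" by blast
  moreover have "missed ` ?Q \<subseteq> K" using Q_outside missed_in_K by blast
  ultimately have image: "missed ` ?Q = K" by blast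
  have "card ?Q \<le> card K" using maximum[OF Q_clique] .
  moreover have "card K \<le> card ?Q" using card_image_le[OF finite_Q, of missed] image by simp
  ultimately have "card (missed ` ?Q) = card ?Q" using image by simp
  then have "inj_on missed ?Q" by (rule eq_card_imp_inj_on[OF finite_Q])
  with image show ?thesis by (simp add: bij_betw_def)
qed

lemma missed_constant_on_part:
  assumes A: "A \<in> P" and "u \<in> A" "v \<in> A"
  shows "missed u = missed v"
proof -
  obtain h where h: "\<forall>B\<in>P. h B \<in> B" using partition_on_choice[OF outside.partition] .
  let ?R = "h ` (P - {A})"
  have images: "missed ` insert w ?R = K" "missed w \<notin> missed ` ?R" if "w \<in> A" for w
  proof -
    have "\<forall>B\<in>P. (h(A := w)) B \<in> B" using h that by simp
    moreover have "(h(A := w)) ` P = insert w ?R" by (simp only: fun_upd_image if_P[OF A])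
    ultimately have bij: "bij_betw missed (insert w ?R) K" by (metis transversal_missed_bij)
    have "w \<notin> ?R"
    proof
      assume "w \<in> ?R"
      then obtain B where "B \<in> P" "B \<noteq> A" "w \<in> B" using h by blast
      then show False using partition_on_part_unique[OF outside.partition A] that by blast
    qed
    have inj: "inj_on missed (insert w ?R)" using bij by (rule bij_betw_imp_inj_on)
    show "missed ` insert w ?R = K" using bij by (rule bij_betw_imp_surj_on)
    show "missed w \<notin> missed ` ?R"
      using inj_on_image_mem_iff[OF inj insertI1 subset_insertI] \<open>w \<notin> ?R\<close> by blast
  qed
  have "missed v \<in> K" using images(1)[OF \<open>v \<in> A\<close>] by blast
  then have "missed v \<in> missed ` insert u ?R" by (simp only: images(1)[OF \<open>u \<in> A\<close>])
  then show ?thesis using images(2)[OF \<open>v \<in> A\<close>] by auto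
qed

lemma missed_fibre_in_P:
  assumes "k \<in> K"
  shows "{v\<in>V - K. missed v = k} \<in> P"
proof -
  obtain h where h: "\<forall>B\<in>P. h B \<in> B" using partition_on_choice[OF outside.partition] .
  then have "k \<in> missed ` h ` P"
    using transversal_missed_bij[OF h] assms unfolding bij_betw_def by simp
  then obtain B where B: "B \<in> P" "missed (h B) = k" by blast
  have "{v\<in>V - K. missed v = k} = B"
  proof
    show "B \<subseteq> {v\<in>V - K. missed v = k}"
      using B h missed_constant_on_part outside.part_subset by blast
    show "{v\<in>V - K. missed v = k} \<subseteq> B"
    proof (rule subsetI, rule ccontr)
      fix v assume v: "v \<in> {v\<in>V - K. missed v = k}" "v \<notin> B"
      have "h B \<in> V - K" using B(1) h outside.part_subset by blast
      moreover have "h B \<noteq> v" using B(1) h v(2) by blast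
      moreover have "\<not> (\<exists>C\<in>P. h B \<in> C \<and> v \<in> C)"
        using partition_on_part_unique[OF outside.partition _ B(1)] h B(1) v(2) by blast
      ultimately have "{h B, v} \<in> E" using adjacent_outside_iff v(1) by auto
      then have "missed (h B) \<noteq> missed v"
        using missed_neq_if_adjacent \<open>h B \<in> V - K\<close> v(1) by blast
      then show False using v(1) B(2) by simp
    qed
  qed
  with B(1) show ?thesis by simp
qed

theorem balanced_complete_multipartite_if_parts_balanced:
  assumes "\<forall>A\<in>P. \<forall>B\<in>P. card A = card B"
  shows "balanced_complete_multipartite V E"
proof (rule balanced_complete_multipartite_blowup[OF simple clique two_le_card_K])
  show "\<forall>v\<in>V - K. missed v \<in> K" using missed_in_K by blast
  show "\<forall>v\<in>V - K. \<forall>k\<in>K. {v, k} \<in> E \<longleftrightarrow> k \<noteq> missed v" using adjacent_K_iff by blast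
  show "\<forall>u\<in>V - K. \<forall>v\<in>V - K. u \<noteq> v \<longrightarrow> ({u, v} \<in> E \<longleftrightarrow> missed u \<noteq> missed v)"
  proof (intro ballI impI iffI)
    fix u v assume uv: "u \<in> V - K" "v \<in> V - K" "u \<noteq> v"
    show "{u, v} \<in> E \<Longrightarrow> missed u \<noteq> missed v" using missed_neq_if_adjacent uv by blast
    show "{u, v} \<in> E" if "missed u \<noteq> missed v"
    proof (rule ccontr)
      assume "{u, v} \<notin> E"
      then obtain A where "A \<in> P" "u \<in> A" "v \<in> A" using adjacent_outside_iff uv by blast
      then show False using missed_constant_on_part that by blast
    qed
  qed
  show "\<forall>k\<in>K. \<forall>k'\<in>K. card {v\<in>V - K. missed v = k} = card {v\<in>V - K. missed v = k'}"
  proof (intro ballI)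
    fix k k' assume "k \<in> K" "k' \<in> K"
    then show "card {v\<in>V - K. missed v = k} = card {v\<in>V - K. missed v = k'}"
      using assms missed_fibre_in_P by blast
  qed
qed

end

lemma (in max_clique) balanced_if_weight_tight:
  assumes "K \<noteq> {}"
    and tight: "total_clique_weight V E = real (card K)^2 / 2 + real (card (V - K)) * card K
      + total_clique_weight (V - K) (induced_edges E (V - K))"
    and outside: "V - K \<noteq> {} \<Longrightarrow> balanced_complete_multipartite (V - K) (induced_edges E (V - K))"
  shows "balanced_complete_multipartite V E"
proof -
  interpret tight_clique V E K
    using total_clique_weight_eq_imp_tight(1,2)[OF assms(1,2)] by unfold_locales
  show ?thesis
  proof (cases "V - K = {}")
    case True
    then show ?thesis by (rule balanced_if_no_outside)
  next
    case False
    then obtain P where multipartite: "complete_multipartite_wrt (V - K) (induced_edges E (V - K)) P"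
      and "2 \<le> card P" and balanced: "\<forall>A\<in>P. \<forall>B\<in>P. card A = card B"
      using outside unfolding balanced_complete_multipartite_iff by blast
    have "edge_clique_num V E e \<le> card P" if "e \<in> induced_edges E (V - K)" for e
      using total_clique_weight_eq_imp_tight(3)[OF assms(1,2) that]
        complete_multipartite.edge_clique_num_eq[OF complete_multipartite.intro[OF
          simple_graph_induced[OF simple Diff_subset] multipartite] that]
      by simp
    then interpret tight_clique_multipartite V E K P
      using multipartite \<open>2 \<le> card P\<close> by unfold_locales
    show ?thesis using balanced by (rule balanced_complete_multipartite_if_parts_balanced)
  qed
qed

lemma (in max_clique) total_clique_weight_step:
  assumes "K \<noteq> {}"
    and IH: "total_clique_weight (V - K) (induced_edges E (V - K)) \<le> real (card (V - K))^2 / 2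
      \<and> (total_clique_weight (V - K) (induced_edges E (V - K)) = real (card (V - K))^2 / 2
          \<longrightarrow> V - K \<noteq> {} \<longrightarrow> balanced_complete_multipartite (V - K) (induced_edges E (V - K)))"
  shows "total_clique_weight V E \<le> real (card V)^2 / 2
    \<and> (total_clique_weight V E = real (card V)^2 / 2 \<longrightarrow> balanced_complete_multipartite V E)"
proof -
  have "card V = card K + card (V - K)"
    using K_subset finite_K simple by (simp add: card_Diff_subset card_mono simple_graph_def)
  then have square: "real (card V)^2 / 2
      = real (card K)^2 / 2 + real (card (V - K)) * card K + real (card (V - K))^2 / 2"
    by (simp add: power2_eq_square algebra_simps)
  have "total_clique_weight V E \<le> real (card V)^2 / 2"
    using total_clique_weight_le IH square by linarith
  moreover have "balanced_complete_multipartite V E"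
    if "total_clique_weight V E = real (card V)^2 / 2"
  proof (rule balanced_if_weight_tight[OF \<open>K \<noteq> {}\<close>])
    show "total_clique_weight V E = real (card K)^2 / 2 + real (card (V - K)) * card K
      + total_clique_weight (V - K) (induced_edges E (V - K))"
      using total_clique_weight_le IH square that by linarith
    have "total_clique_weight (V - K) (induced_edges E (V - K)) = real (card (V - K))^2 / 2"
      using total_clique_weight_le IH square that by linarith
    then show "V - K \<noteq> {} \<Longrightarrow> balanced_complete_multipartite (V - K) (induced_edges E (V - K))"
      using IH by blast
  qed
  ultimately show ?thesis by blast
qed

theorem total_clique_weight_bound:
  assumes "simple_graph V E"
  shows "total_clique_weight V E \<le> real (card V)^2 / 2
    \<and> (total_clique_weight V E = real (card V)^2 / 2 \<longrightarrow> V \<noteq> {} \<longrightarrow> balanced_complete_multipartite V E)"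
  using assms
proof (induction "card V" arbitrary: V E rule: less_induct)
  case less
  show ?case
  proof (cases "V = {}")
    case True
    then have "E = {}" using less.prems by (auto simp: simple_graph_def)
    then show ?thesis using True by (simp add: total_clique_weight_def)
  next
    case False
    obtain K where "is_clique V E K" "\<And>K'. is_clique V E K' \<Longrightarrow> card K' \<le> card K"
      using maximum_clique_exists[OF less.prems] by blast
    then interpret max_clique V E K using less.prems by unfold_locales
    obtain v where "v \<in> V" using False by blast
    then have "K \<noteq> {}" using maximum[OF singleton_is_clique[OF \<open>v \<in> V\<close>]] by auto
    then have "0 < card K" using finite_K by (simp add: card_gt_0_iff)
    moreover have "card K \<le> card V" using K_subset less.prems by (simp add: card_mono simple_graph_def)
    ultimately have "card (V - K) < card V" using K_subset finite_K by (simp add: card_Diff_subset)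
    then show ?thesis
      using total_clique_weight_step[OF \<open>K \<noteq> {}\<close>] less.hyps
        simple_graph_induced[OF less.prems Diff_subset] by blast
  qed
qed

theorem theorem1:
  fixes V :: "'a set" and E :: "'a set set"
  assumes "simple_graph V E" and "V \<noteq> {}"
  defines "c \<equiv> edge_clique_num V E"
  shows "(\<Sum>e\<in>E. real (c e) / (real (c e) - 1)) \<le> real (card V) ^ 2 / 2
    \<and> ((\<Sum>e\<in>E. real (c e) / (real (c e) - 1)) = real (card V) ^ 2 / 2
           \<longleftrightarrow> balanced_complete_multipartite V E)"
proof -
  have "(\<Sum>e\<in>E. real (c e) / (real (c e) - 1)) = total_clique_weight V E"
    unfolding total_clique_weight_def clique_weight_def c_def ..
  then show ?thesis
    using total_clique_weight_bound[OF assms(1)] assms(2)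
      balanced_complete_multipartite_total_clique_weight[OF assms(1)]
    by (simp only:) blast
qed

end
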